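(* Fix real weights $w_A,w_B\ge 0$, rate targets $r_A,r_B\ge 0$, power budgets $P_A,P_B,P_R>0$, and dual variables $\lambda_A^{b_1},\lambda_B^{b_1},\lambda_A^{c_1},\lambda_B^{c_1},\lambda_{AB}^c,\mu_A,\mu_B\ge 0$ and $\alpha_A,\alpha_B,\alpha_R>0$ such that $w_k+\mu_k-\lambda_k^{b_1}\ge 0$ and $\xi_k:=w_k+\mu_k-\lambda_k^{c_1}-\lambda_{AB}^c\ge 0$ for $k\in\{A,B\}$. Then the maximum defining the dual function $g$ (see context) is attained at some feasible $(\boldsymbol\rho^*,\boldsymbol s^* )$ for which every entry of $\boldsymbol\rho^*$ lies in $\{0,1\}$.
   Context: Setting: users $A,B$ and relay $R$, subcarriers $n\in\{1,\dots,N\}$, nonnegative channel gains $|h_{j,j',n}|^2$ from node $j$ to node $j'$ on subcarrier $n$ ($j\neq j'\in\{A,B,R\}$). For $k\in\{A,B\}$, $k'$ denotes the other user. Per subcarrier $n$, the assignment vector is $\boldsymbol\rho_n=(\rho^a_{A,n},\rho^a_{B,n},\rho^b_{A,n,1},\rho^b_{B,n,1},\rho^b_{A,n,2},\rho^b_{B,n,2},\rho^c_{n,1},\rho^c_{n,2})\in[0,1]^8$ with sum of entries $\le 1$. Power variables (all $\ge 0$): $s^a_{k,n}$ (user $k$ direct), $s^b_{k,R,n}$ (user $k$ to relay, one-way), $s^b_{R,k,n}$ (relay forwarding user $k$'s message to $k'$, one-way), $s^c_{k,R,n}$ (user $k$ to relay, two-way), $s^c_{R,n}$ (relay broadcast,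 two-way). A pair $(\boldsymbol\rho,\boldsymbol s)$ satisfying these constraints is called feasible. Define $F(\rho,x)=\rho\log_2(1+x/\rho)$ for $\rho>0$ and $F(0,x)=0$. Rates: $D_{k,n}=F(\rho^a_{k,n},s^a_{k,n}|h_{k,k',n}|^2)$; $B^1_{k,n}=F(\rho^b_{k,n,1},s^b_{k,R,n}|h_{k,R,n}|^2)$; $B^2_{k,n}=F(\rho^b_{k,n,2},s^b_{R,k,n}|h_{R,k',n}|^2)$; $C^1_{k,n}=F(\rho^c_{n,1},s^c_{k,R,n}|h_{k,R,n}|^2)$; $C^{12}_n=F(\rho^c_{n,1},s^c_{A,R,n}|h_{A,R,n}|^2+s^c_{B,R,n}|h_{B,R,n}|^2)$; $C^2_{k,n}=F(\rho^c_{n,2},s^c_{R,n}|h_{R,k',n}|^2)$. With $\xi_k=w_k+\mu_k-\lambda_k^{c_1}-\lambda_{AB}^c$, the dual function is $g=\max_{(\boldsymbol\rho,\boldsymbol s)\text{ feasible}}\Big\{\sum_{n=1}^N\sum_{k\in\{A,B\}}\big[(w_k+\mu_k)D_{k,n}+\lambda_k^{b_1}B^1_{k,n}+(w_k+\mu_k-\lambda_k^{b_1})B^2_{k,n}+\lambda_k^{c_1}C^1_{k,n}+\xi_kC^2_{k,n}\big]+\lambda_{AB}^c\sum_{n=1}^N C^{12}_n+\sum_{k\in\{A,B\}}\alpha_k\big(P_k-\sum_{n=1}^N(s^a_{k,n}+s^b_{k,R,n}+s^c_{k,R,n})\big)+\alpha_R\big(P_R-\sum_{n=1}^N(\sum_{k\in\{A,B\}}s^b_{R,k,n}+s^c_{R,n})\big)-\sum_{k\in\{A,B\}}\mu_kr_k\Big\}$.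 *)

theory Defs
  imports Complex_Main
begin

datatype user = A | B

fun other :: "user \<Rightarrow> user" where
  "other A = B" | "other B = A"

datatype node = U user | R

text \<open>Indices of the 8 entries of the assignment vector rho_n:
  Ra k = rho^a_{k,n}, Rb1 k = rho^b_{k,n,1}, Rb2 k = rho^b_{k,n,2},
  Rc1 = rho^c_{n,1}, Rc2 = rho^c_{n,2}.\<close>
datatype ridx = Ra user | Rb1 user | Rb2 user | Rc1 | Rc2

text \<open>Power variables: Sa k = s^a_{k,n}, SbUR k = s^b_{k,R,n}, SbRU k = s^b_{R,k,n},
  ScUR k = s^c_{k,R,n}, ScR = s^c_{R,n}.\<close>
datatype sidx = Sa user | SbUR user | SbRU user | ScUR user | ScR

definition F :: "real \<Rightarrow> real \<Rightarrow> real" where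
  "F \<rho> x = (if \<rho> = 0 then 0 else \<rho> * log 2 (1 + x / \<rho>))"

definition rho_sum :: "(ridx \<Rightarrow> real) \<Rightarrow> real" where
  "rho_sum r = r (Ra A) + r (Ra B) + r (Rb1 A) + r (Rb1 B) + r (Rb2 A) + r (Rb2 B)
              + r Rc1 + r Rc2"

definition feasible :: "nat \<Rightarrow> (nat \<Rightarrow> ridx \<Rightarrow> real) \<Rightarrow> (nat \<Rightarrow> sidx \<Rightarrow> real) \<Rightarrow> bool" where
  "feasible N \<rho> s \<longleftrightarrow> (\<forall>n\<in>{1..N}.
      (\<forall>i. 0 \<le> \<rho> n i \<and> \<rho> n i \<le> 1) \<and> rho_sum (\<rho> n) \<le> 1 \<and> (\<forall>p. 0 \<le> s n p))"

text \<open>h j j' n stands for |h_{j,j',n}|^2.\<close>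
definition Drate where
  "Drate h \<rho> s k n = F (\<rho> n (Ra k)) (s n (Sa k) * h (U k) (U (other k)) n)"
definition B1rate where
  "B1rate h \<rho> s k n = F (\<rho> n (Rb1 k)) (s n (SbUR k) * h (U k) R n)"
definition B2rate where
  "B2rate h \<rho> s k n = F (\<rho> n (Rb2 k)) (s n (SbRU k) * h R (U (other k)) n)"
definition C1rate where
  "C1rate h \<rho> s k n = F (\<rho> n Rc1) (s n (ScUR k) * h (U k) R n)"
definition C12rate where
  "C12rate h \<rho> s n = F (\<rho> n Rc1) (s n (ScUR A) * h (U A) R n + s n (ScUR B) * h (U B) R n)"
definition C2rate where
  "C2rate h \<rho> s k n = F (\<rho> n Rc2) (s n ScR * h R (U (other k)) n)"

text \<open>The objective inside the max defining the dual function g.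
  lb1 = lambda^{b_1}, lc1 = lambda^{c_1}, lAB = lambda^c_{AB}.\<close>
definition dual_obj ::
  "nat \<Rightarrow> (node \<Rightarrow> node \<Rightarrow> nat \<Rightarrow> real) \<Rightarrow>
   (user \<Rightarrow> real) \<Rightarrow> (user \<Rightarrow> real) \<Rightarrow> (user \<Rightarrow> real) \<Rightarrow> real \<Rightarrow>
   (user \<Rightarrow> real) \<Rightarrow> (user \<Rightarrow> real) \<Rightarrow> real \<Rightarrow>
   (user \<Rightarrow> real) \<Rightarrow> (user \<Rightarrow> real) \<Rightarrow> real \<Rightarrow>
   (nat \<Rightarrow> ridx \<Rightarrow> real) \<Rightarrow> (nat \<Rightarrow> sidx \<Rightarrow> real) \<Rightarrow> real" where
  "dual_obj N h w r P PR lb1 lc1 lAB \<mu> \<alpha> \<alpha>R \<rho> s =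
     (\<Sum>n=1..N. \<Sum>k\<in>{A,B}.
        (w k + \<mu> k) * Drate h \<rho> s k n + lb1 k * B1rate h \<rho> s k n
        + (w k + \<mu> k - lb1 k) * B2rate h \<rho> s k n + lc1 k * C1rate h \<rho> s k n
        + (w k + \<mu> k - lc1 k - lAB) * C2rate h \<rho> s k n)
     + lAB * (\<Sum>n=1..N. C12rate h \<rho> s n)
     + (\<Sum>k\<in>{A,B}. \<alpha> k * (P k - (\<Sum>n=1..N. s n (Sa k) + s n (SbUR k) + s n (ScUR k))))
     + \<alpha>R * (PR - (\<Sum>n=1..N. (\<Sum>k\<in>{A,B}. s n (SbRU k)) + s n ScR))
     - (\<Sum>k\<in>{A,B}. \<mu> k * r k)"

end

theory Submission
  imports Defs "HOL-Analysis.Analysis"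
begin

text \<open>Every slot of a subcarrier (direct link, one-way hop, two-way phase) contributes
  \<open>\<rho> \<phi>(x/\<rho>)\<close>, the perspective of a concave rate-minus-price function \<open>\<phi>\<close>; the prices are
  positive, so \<open>\<phi>\<close> is coercive and attains its maximum \<open>V \<ge> \<phi>(0) = 0\<close>. Hence a subcarrier
  yields at most \<open>\<Sum>\<^sub>j \<rho>\<^sub>j V\<^sub>j \<le> max\<^sub>j V\<^sub>j\<close>, and this bound is attained by giving the whole
  subcarrier to a best slot with its maximising powers. The objective is a sum over subcarriers
  plus a constant, so these choices together are a binary maximiser.\<close>

lemma F_zero_right [simp]: "F \<rho> 0 = 0"
  by (simp add: F_def)

lemma F_one: "F 1 x = log 2 (1 + x)"
  by (simp add: F_def)

lemma log2_one_plus_le: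
  assumes "0 \<le> u" "1 \<le> L"
  shows "log 2 (1 + u) \<le> (ln L + u / L) / ln 2"
proof -
  have "ln ((1 + u) / L) \<le> (1 + u) / L - 1"
    using assms by (intro ln_le_minus_one) auto
  then have "ln (1 + u) \<le> ln L + (1 + u) / L - 1"
    using assms by (simp add: ln_div)
  also have "\<dots> \<le> ln L + u / L"
    using assms by (simp add: add_divide_distrib)
  finally show ?thesis
    unfolding log_def by (simp add: divide_right_mono)
qed

text \<open>Rates of up to three links fed by the powers \<open>x1\<close>, \<open>x2\<close> (the third link carries their
  superposition, as in the multiple-access phase of two-way relaying), minus the prices
  \<open>b1\<close>, \<open>b2\<close> of the powers. Every slot of the dual objective is an instance.\<close>
definition slot_utility ::
  "real \<Rightarrow> real \<Rightarrow> real \<Rightarrow> real \<Rightarrow> real \<Rightarrow> real \<Rightarrow> real \<Rightarrow> real \<Rightarrow> real \<Rightarrow> real \<Rightarrow> real \<Rightarrow> real \<Rightarrow> real"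
  where "slot_utility c1 c2 c3 a1 a2 a3 a4 b1 b2 \<rho> x1 x2 =
    c1 * F \<rho> (x1 * a1) + c2 * F \<rho> (x2 * a2) + c3 * F \<rho> (x1 * a3 + x2 * a4) - b1 * x1 - b2 * x2"

lemma slot_utility_perspective:
  assumes "0 < \<rho>"
  shows "slot_utility c1 c2 c3 a1 a2 a3 a4 b1 b2 \<rho> x1 x2 =
    \<rho> * slot_utility c1 c2 c3 a1 a2 a3 a4 b1 b2 1 (x1 / \<rho>) (x2 / \<rho>)"
  using assms by (simp add: slot_utility_def F_def algebra_simps add_divide_distrib)

context
  fixes c1 c2 c3 a1 a2 a3 a4 b1 b2 :: real
  assumes c_nonneg: "0 \<le> c1" "0 \<le> c2" "0 \<le> c3"
    and a_nonneg: "0 \<le> a1" "0 \<le> a2" "0 \<le> a3" "0 \<le> a4"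
    and b_pos: "0 < b1" "0 < b2"
begin

private abbreviation "\<phi> \<equiv> slot_utility c1 c2 c3 a1 a2 a3 a4 b1 b2"

lemma slot_utility_le_affine:
  "\<exists>D. \<forall>y1 y2. 0 \<le> y1 \<longrightarrow> 0 \<le> y2 \<longrightarrow> \<phi> 1 y1 y2 \<le> D - (b1 * y1 + b2 * y2) / 2"
proof -
  define q1 where "q1 = c1 * a1 + c3 * a3"
  define q2 where "q2 = c2 * a2 + c3 * a4"
  \<comment> \<open>\<open>L\<close> is large enough that the linear part of the log bound costs at most half the prices.\<close>
  define L where "L = max 1 (max (2 * q1 / (b1 * ln 2)) (2 * q2 / (b2 * ln 2)))"
  have L: "1 \<le> L" unfolding L_def by simp
  have "2 * q1 / (b1 * ln 2) \<le> L" "2 * q2 / (b2 * ln 2) \<le> L"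
    unfolding L_def by auto
  then have q1: "q1 / (L * ln 2) \<le> b1 / 2" and q2: "q2 / (L * ln 2) \<le> b2 / 2"
    using L b_pos by (simp_all add: pos_divide_le_eq mult.commute mult.left_commute)
  show ?thesis
  proof (intro exI allI impI)
    fix y1 y2 :: real
    assume y: "0 \<le> y1" "0 \<le> y2"
    have "\<phi> 1 y1 y2 \<le> c1 * ((ln L + y1 * a1 / L) / ln 2) + c2 * ((ln L + y2 * a2 / L) / ln 2)
        + c3 * ((ln L + (y1 * a3 + y2 * a4) / L) / ln 2) - b1 * y1 - b2 * y2"
      unfolding slot_utility_def F_one using y a_nonneg c_nonneg L
      by (intro diff_right_mono add_mono mult_left_mono log2_one_plus_le) auto
    also have "\<dots> = (c1 + c2 + c3) * ln L / ln 2 + y1 * (q1 / (L * ln 2)) + y2 * (q2 / (L * ln 2))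
        - b1 * y1 - b2 * y2"
      unfolding q1_def q2_def using L by (simp add: field_simps)
    also have "\<dots> \<le> (c1 + c2 + c3) * ln L / ln 2 + y1 * (b1 / 2) + y2 * (b2 / 2) - b1 * y1 - b2 * y2"
      using q1 q2 y by (intro diff_right_mono add_mono mult_left_mono) auto
    finally show "\<phi> 1 y1 y2 \<le> (c1 + c2 + c3) * ln L / ln 2 - (b1 * y1 + b2 * y2) / 2"
      by (simp add: field_simps)
  qed
qed

lemma continuous_on_slot_utility:
  "continuous_on ({0..} \<times> {0..}) (\<lambda>y. \<phi> 1 (fst y) (snd y))"
  unfolding slot_utility_def F_one log_def using a_nonneg
  by (intro continuous_intros) (auto simp: add_nonneg_eq_0_iff zero_le_mult_iff)

lemma slot_utility_nonpos_outside_box: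
  "\<exists>M\<ge>0. \<forall>y1 y2. 0 \<le> y1 \<longrightarrow> 0 \<le> y2 \<longrightarrow> (M < y1 \<or> M < y2) \<longrightarrow> \<phi> 1 y1 y2 \<le> 0"
proof -
  obtain D where D: "\<And>y1 y2. 0 \<le> y1 \<Longrightarrow> 0 \<le> y2 \<Longrightarrow> \<phi> 1 y1 y2 \<le> D - (b1 * y1 + b2 * y2) / 2"
    using slot_utility_le_affine by blast
  have "0 \<le> D"
    using D[of 0 0] by (simp add: slot_utility_def)
  define m where "m = min b1 b2"
  define M where "M = 2 * D / m"
  have m: "0 < m" "m \<le> b1" "m \<le> b2"
    using b_pos unfolding m_def by auto
  have "\<phi> 1 y1 y2 \<le> 0" if y: "0 \<le> y1" "0 \<le> y2" and "M < y1 \<or> M < y2" for y1 y2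
  proof -
    have "2 * D < m * y1 + m * y2"
      using \<open>M < y1 \<or> M < y2\<close>
    proof
      assume "M < y1"
      then have "2 * D < m * y1"
        using m unfolding M_def by (simp add: pos_divide_less_eq mult.commute)
      moreover have "0 \<le> m * y2"
        using m y by simp
      ultimately show ?thesis
        by linarith
    next
      assume "M < y2"
      then have "2 * D < m * y2"
        using m unfolding M_def by (simp add: pos_divide_less_eq mult.commute)
      moreover have "0 \<le> m * y1"
        using m y by simp
      ultimately show ?thesis
        by linarith
    qed
    also have "\<dots> \<le> b1 * y1 + b2 * y2"
      using m y by (intro add_mono mult_right_mono) auto
    finally show ?thesis
      using D[OF y] by argo
  qed
  moreover have "0 \<le> M"
    unfolding M_def using \<open>0 \<le> D\<close> m by simp
  ultimately show ?thesis
    by blast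
qed

lemma slot_utility_attains_max:
  "\<exists>z1 z2. 0 \<le> z1 \<and> 0 \<le> z2 \<and>
     (\<forall>y1 y2. 0 \<le> y1 \<longrightarrow> 0 \<le> y2 \<longrightarrow> \<phi> 1 y1 y2 \<le> \<phi> 1 z1 z2)"
proof -
  let ?f = "\<lambda>y::real \<times> real. \<phi> 1 (fst y) (snd y)"
  obtain M where "0 \<le> M"
    and outside: "\<And>y1 y2. 0 \<le> y1 \<Longrightarrow> 0 \<le> y2 \<Longrightarrow> M < y1 \<or> M < y2 \<Longrightarrow> \<phi> 1 y1 y2 \<le> 0"
    using slot_utility_nonpos_outside_box by blast
  let ?K = "{0..M} \<times> {0..M}"
  have "continuous_on ?K ?f"
    by (rule continuous_on_subset[OF continuous_on_slot_utility]) auto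
  moreover have "compact ?K" "?K \<noteq> {}"
    using \<open>0 \<le> M\<close> by (auto intro: compact_Times compact_Icc)
  ultimately obtain z where "z \<in> ?K" and z: "\<And>y. y \<in> ?K \<Longrightarrow> ?f y \<le> ?f z"
    using continuous_attains_sup[of ?K ?f] by blast
  have "\<phi> 1 y1 y2 \<le> ?f z" if y: "0 \<le> y1" "0 \<le> y2" for y1 y2
  proof (cases "(y1, y2) \<in> ?K")
    case True
    then show ?thesis
      using z by fastforce
  next
    case False
    then have "\<phi> 1 y1 y2 \<le> 0"
      using y by (intro outside) auto
    also have "0 = ?f (0, 0)"
      by (simp add: slot_utility_def)
    also have "\<dots> \<le> ?f z"
      using z[of "(0, 0)"] \<open>0 \<le> M\<close> by simp
    finally show ?thesis .
  qed
  with \<open>z \<in> ?K\<close> show ?thesis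
    by (intro exI[of _ "fst z"] exI[of _ "snd z"]) auto
qed

text \<open>When \<open>x2\<close> enters no rate (\<open>c2 = a4 = 0\<close>) it is only priced, so the maximiser can take
  \<open>y2 = 0\<close>; the single-power slots rely on this.\<close>
lemma slot_utility_le_perspective_max:
  "\<exists>y1 y2. 0 \<le> y1 \<and> 0 \<le> y2 \<and> (c2 = 0 \<and> a4 = 0 \<longrightarrow> y2 = 0) \<and>
     (\<forall>\<rho> x1 x2. 0 \<le> \<rho> \<longrightarrow> 0 \<le> x1 \<longrightarrow> 0 \<le> x2 \<longrightarrow> \<phi> \<rho> x1 x2 \<le> \<rho> * \<phi> 1 y1 y2)"
proof -
  obtain z1 z2 where z: "0 \<le> z1" "0 \<le> z2"
    and z_max: "\<And>x1 x2. 0 \<le> x1 \<Longrightarrow> 0 \<le> x2 \<Longrightarrow> \<phi> 1 x1 x2 \<le> \<phi> 1 z1 z2"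
    using slot_utility_attains_max by blast
  obtain y1 y2 where y: "0 \<le> y1" "0 \<le> y2" "c2 = 0 \<and> a4 = 0 \<longrightarrow> y2 = 0"
    and y_max: "\<And>x1 x2. 0 \<le> x1 \<Longrightarrow> 0 \<le> x2 \<Longrightarrow> \<phi> 1 x1 x2 \<le> \<phi> 1 y1 y2"
  proof (cases "c2 = 0 \<and> a4 = 0")
    case True
    then have "\<phi> 1 z1 z2 \<le> \<phi> 1 z1 0"
      using b_pos z by (simp add: slot_utility_def)
    with True z z_max show ?thesis
      using that[of z1 0] by force
  next
    case False
    with z z_max show ?thesis
      using that[of z1 z2] by blast
  qed
  have "\<phi> \<rho> x1 x2 \<le> \<rho> * \<phi> 1 y1 y2" if x: "0 \<le> \<rho>" "0 \<le> x1" "0 \<le> x2" for \<rho> x1 x2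
  proof (cases "\<rho> = 0")
    case True
    have "0 \<le> b1 * x1" "0 \<le> b2 * x2"
      using x b_pos by simp_all
    with True show ?thesis
      by (simp add: slot_utility_def F_def)
  next
    case False
    with x have "0 < \<rho>"
      by simp
    then have "\<phi> \<rho> x1 x2 = \<rho> * \<phi> 1 (x1 / \<rho>) (x2 / \<rho>)"
      by (rule slot_utility_perspective)
    also have "\<dots> \<le> \<rho> * \<phi> 1 y1 y2"
      using \<open>0 < \<rho>\<close> x by (intro mult_left_mono y_max) auto
    finally show ?thesis .
  qed
  with y show ?thesis
    by blast
qed

end

lemma UNIV_ridx: "UNIV = {Ra A, Ra B, Rb1 A, Rb1 B, Rb2 A, Rb2 B, Rc1, Rc2}"
proof -
  have "i \<in> {Ra A, Ra B, Rb1 A, Rb1 B, Rb2 A, Rb2 B, Rc1, Rc2}" for i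
    using user.nchotomy by (cases i) auto
  then show ?thesis
    by blast
qed

instance ridx :: finite
  by standard (simp add: UNIV_ridx)

lemma rho_sum_eq_sum: "rho_sum r = sum r UNIV"
  by (simp add: rho_sum_def UNIV_ridx algebra_simps)

fun first_power :: "ridx \<Rightarrow> sidx" where
  "first_power (Ra k) = Sa k"
| "first_power (Rb1 k) = SbUR k"
| "first_power (Rb2 k) = SbRU k"
| "first_power Rc1 = ScUR A"
| "first_power Rc2 = ScR"

definition second_power :: "ridx \<Rightarrow> (sidx \<Rightarrow> real) \<Rightarrow> real" where
  "second_power j v = (if j = Rc1 then v (ScUR B) else 0)"

definition slot_powers :: "ridx \<Rightarrow> real \<Rightarrow> real \<Rightarrow> sidx \<Rightarrow> real" where
  "slot_powers j y1 y2 p =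
    (if p = first_power j then y1 else if j = Rc1 \<and> p = ScUR B then y2 else 0)"

lemma first_power_inject: "first_power i = first_power j \<longleftrightarrow> i = j"
  by (cases i; cases j) auto

lemma first_power_neq_ScUR_B: "first_power j \<noteq> ScUR B"
  by (cases j) auto

locale dual_params =
  fixes h :: "node \<Rightarrow> node \<Rightarrow> nat \<Rightarrow> real"
    and w lb1 lc1 \<mu> \<alpha> :: "user \<Rightarrow> real"
    and lAB \<alpha>R :: real
  assumes h_nonneg: "\<And>j j' n. 0 \<le> h j j' n"
    and w_nonneg: "\<And>k. 0 \<le> w k"
    and lb1_nonneg: "\<And>k. 0 \<le> lb1 k"
    and lc1_nonneg: "\<And>k. 0 \<le> lc1 k"
    and lAB_nonneg: "0 \<le> lAB"
    and mu_nonneg: "\<And>k. 0 \<le> \<mu> k"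
    and alpha_pos: "\<And>k. 0 < \<alpha> k"
    and alphaR_pos: "0 < \<alpha>R"
    and b2_nonneg: "\<And>k. 0 \<le> w k + \<mu> k - lb1 k"
    and xi_nonneg: "\<And>k. 0 \<le> w k + \<mu> k - lc1 k - lAB"
begin

text \<open>The single-power slots give the unused second power the dummy price \<open>1\<close>.\<close>
fun slot_value :: "nat \<Rightarrow> ridx \<Rightarrow> real \<Rightarrow> real \<Rightarrow> real \<Rightarrow> real" where
  "slot_value n (Ra k) = slot_utility (w k + \<mu> k) 0 0 (h (U k) (U (other k)) n) 0 0 0 (\<alpha> k) 1"
| "slot_value n (Rb1 k) = slot_utility (lb1 k) 0 0 (h (U k) R n) 0 0 0 (\<alpha> k) 1"
| "slot_value n (Rb2 k) = slot_utility (w k + \<mu> k - lb1 k) 0 0 (h R (U (other k)) n) 0 0 0 \<alpha>R 1"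
| "slot_value n Rc1 = slot_utility (lc1 A) (lc1 B) lAB
     (h (U A) R n) (h (U B) R n) (h (U A) R n) (h (U B) R n) (\<alpha> A) (\<alpha> B)"
| "slot_value n Rc2 = slot_utility (w A + \<mu> A - lc1 A - lAB) 0 (w B + \<mu> B - lc1 B - lAB)
     (h R (U B) n) 0 (h R (U A) n) 0 \<alpha>R 1"

lemma slot_value_zero_powers [simp]: "slot_value n j \<rho> 0 0 = 0"
  by (cases j) (simp_all add: slot_utility_def)

definition subcarrier_value :: "nat \<Rightarrow> (ridx \<Rightarrow> real) \<Rightarrow> (sidx \<Rightarrow> real) \<Rightarrow> real" where
  "subcarrier_value n \<rho> v = (\<Sum>j\<in>UNIV. slot_value n j (\<rho> j) (v (first_power j)) (second_power j v))"

lemma dual_obj_eq_sum_subcarrier_value: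
  "dual_obj N h w r P PR lb1 lc1 lAB \<mu> \<alpha> \<alpha>R \<rho> s =
    (\<Sum>n=1..N. subcarrier_value n (\<rho> n) (s n))
    + (\<Sum>k\<in>{A,B}. \<alpha> k * P k) + \<alpha>R * PR - (\<Sum>k\<in>{A,B}. \<mu> k * r k)"
proof (induction N)
  case 0
  then show ?case
    by (simp add: dual_obj_def)
next
  case (Suc N)
  then show ?case
    unfolding dual_obj_def subcarrier_value_def
    by (simp add: UNIV_ridx second_power_def slot_utility_def Drate_def B1rate_def B2rate_def
        C1rate_def C12rate_def C2rate_def algebra_simps)
qed

lemma slot_value_le_perspective_max:
  "\<exists>y1 y2. 0 \<le> y1 \<and> 0 \<le> y2 \<and> (j \<noteq> Rc1 \<longrightarrow> y2 = 0) \<and>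
     (\<forall>\<rho> x1 x2. 0 \<le> \<rho> \<longrightarrow> 0 \<le> x1 \<longrightarrow> 0 \<le> x2 \<longrightarrow>
        slot_value n j \<rho> x1 x2 \<le> \<rho> * slot_value n j 1 y1 y2)"
proof (cases j)
  case (Ra k)
  then show ?thesis
    using slot_utility_le_perspective_max[of "w k + \<mu> k" 0 0 "h (U k) (U (other k)) n" 0 0 0 "\<alpha> k" 1]
      h_nonneg w_nonneg mu_nonneg alpha_pos by simp
next
  case (Rb1 k)
  then show ?thesis
    using slot_utility_le_perspective_max[of "lb1 k" 0 0 "h (U k) R n" 0 0 0 "\<alpha> k" 1]
      h_nonneg lb1_nonneg alpha_pos by simp
next
  case (Rb2 k)
  then show ?thesis
    using slot_utility_le_perspective_max[of "w k + \<mu> k - lb1 k" 0 0 "h R (U (other k)) n" 0 0 0 \<alpha>R 1]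
      h_nonneg b2_nonneg alphaR_pos by simp
next
  case Rc1
  have "\<exists>y1 y2. 0 \<le> y1 \<and> 0 \<le> y2 \<and>
     (\<forall>\<rho> x1 x2. 0 \<le> \<rho> \<longrightarrow> 0 \<le> x1 \<longrightarrow> 0 \<le> x2 \<longrightarrow>
        slot_value n Rc1 \<rho> x1 x2 \<le> \<rho> * slot_value n Rc1 1 y1 y2)"
    using slot_utility_le_perspective_max[of "lc1 A" "lc1 B" lAB "h (U A) R n" "h (U B) R n"
        "h (U A) R n" "h (U B) R n" "\<alpha> A" "\<alpha> B"]
      h_nonneg lc1_nonneg lAB_nonneg alpha_pos by auto
  with Rc1 show ?thesis
    by simp
next
  case Rc2
  then show ?thesis
    using slot_utility_le_perspective_max[of "w A + \<mu> A - lc1 A - lAB" 0 "w B + \<mu> B - lc1 B - lAB"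
        "h R (U B) n" 0 "h R (U A) n" 0 \<alpha>R 1]
      h_nonneg xi_nonneg alphaR_pos by simp
qed

lemma subcarrier_value_single_slot:
  "subcarrier_value n (\<lambda>i. of_bool (i = j)) (slot_powers j y1 y2) =
    slot_value n j 1 y1 (if j = Rc1 then y2 else 0)"
proof -
  let ?v = "slot_powers j y1 y2"
  have "subcarrier_value n (\<lambda>i. of_bool (i = j)) ?v =
      slot_value n j 1 (?v (first_power j)) (second_power j ?v)
      + (\<Sum>i\<in>UNIV - {j}. slot_value n i 0 (?v (first_power i)) (second_power i ?v))"
    unfolding subcarrier_value_def by (subst sum.remove[of _ j]) auto
  moreover have "(\<Sum>i\<in>UNIV - {j}. slot_value n i 0 (?v (first_power i)) (second_power i ?v)) = 0"
    by (intro sum.neutral)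
      (auto simp: slot_powers_def second_power_def first_power_inject
        first_power_neq_ScUR_B first_power_neq_ScUR_B[symmetric] simp del: slot_value.simps)
  moreover have "?v (first_power j) = y1" "second_power j ?v = (if j = Rc1 then y2 else 0)"
    by (simp_all add: slot_powers_def second_power_def first_power_neq_ScUR_B[symmetric])
  ultimately show ?thesis
    by simp
qed

lemma subcarrier_value_binary_max:
  "\<exists>\<rho>' v'. (\<forall>i. \<rho>' i \<in> {0, 1}) \<and> rho_sum \<rho>' \<le> 1 \<and> (\<forall>p. 0 \<le> v' p) \<and>
     (\<forall>\<rho> v. (\<forall>i. 0 \<le> \<rho> i) \<longrightarrow> rho_sum \<rho> \<le> 1 \<longrightarrow> (\<forall>p. 0 \<le> v p) \<longrightarrow>
        subcarrier_value n \<rho> v \<le> subcarrier_value n \<rho>' v')"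
proof -
  have "\<forall>j. \<exists>y1 y2. 0 \<le> y1 \<and> 0 \<le> y2 \<and> (j \<noteq> Rc1 \<longrightarrow> y2 = 0) \<and>
     (\<forall>\<rho> x1 x2. 0 \<le> \<rho> \<longrightarrow> 0 \<le> x1 \<longrightarrow> 0 \<le> x2 \<longrightarrow>
        slot_value n j \<rho> x1 x2 \<le> \<rho> * slot_value n j 1 y1 y2)"
    using slot_value_le_perspective_max by blast
  then obtain y1 y2 where y: "\<And>j. 0 \<le> y1 j" "\<And>j. 0 \<le> y2 j" "\<And>j. j \<noteq> Rc1 \<Longrightarrow> y2 j = 0"
    and y_max: "\<And>j \<rho> x1 x2. 0 \<le> \<rho> \<Longrightarrow> 0 \<le> x1 \<Longrightarrow> 0 \<le> x2 \<Longrightarrow>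
      slot_value n j \<rho> x1 x2 \<le> \<rho> * slot_value n j 1 (y1 j) (y2 j)"
    by metis
  define V where "V j = slot_value n j 1 (y1 j) (y2 j)" for j
  have V_nonneg: "0 \<le> V j" for j
    using y_max[of 1 0 0 j] by (simp add: V_def)
  obtain j0 where "Max (range V) = V j0"
    using obtains_MAX[of UNIV V] by auto
  then have V_max: "V j \<le> V j0" for j
    using Max_ge[of "range V" "V j"] by simp
  define \<rho>' where "\<rho>' i = (of_bool (i = j0) :: real)" for i
  define v' where "v' = slot_powers j0 (y1 j0) (y2 j0)"
  have best_value: "subcarrier_value n \<rho>' v' = V j0"
    unfolding \<rho>'_def v'_def subcarrier_value_single_slot V_def using y(3)[of j0] by auto
  have "subcarrier_value n \<rho> v \<le> V j0"
    if \<rho>: "\<forall>i. 0 \<le> \<rho> i" "rho_sum \<rho> \<le> 1" and v: "\<forall>p. 0 \<le> v p" for \<rho> v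
  proof -
    have "subcarrier_value n \<rho> v \<le> (\<Sum>j\<in>UNIV. \<rho> j * V j)"
      unfolding subcarrier_value_def V_def using \<rho> v
      by (intro sum_mono y_max) (auto simp: second_power_def)
    also have "\<dots> \<le> (\<Sum>j\<in>UNIV. \<rho> j * V j0)"
      using \<rho> V_max by (intro sum_mono mult_left_mono) auto
    also have "\<dots> = rho_sum \<rho> * V j0"
      by (simp add: rho_sum_eq_sum sum_distrib_right)
    also have "\<dots> \<le> V j0"
      using \<rho> V_nonneg[of j0]
      by (intro mult_left_le_one_le) (auto simp: rho_sum_eq_sum intro: sum_nonneg)
    finally show ?thesis .
  qed
  moreover have "rho_sum \<rho>' = 1"
    by (simp add: \<rho>'_def rho_sum_eq_sum)
  moreover have "0 \<le> v' p" for p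
    using y by (simp add: v'_def slot_powers_def)
  ultimately show ?thesis
    using best_value by (intro exI[of _ \<rho>'] exI[of _ v']) (auto simp: \<rho>'_def)
qed

end

theorem proposition2:
  fixes N :: nat
    and h :: "node \<Rightarrow> node \<Rightarrow> nat \<Rightarrow> real"
    and w r P lb1 lc1 \<mu> \<alpha> :: "user \<Rightarrow> real"
    and PR lAB \<alpha>R :: real
  assumes h_nonneg: "\<And>j j' n. 0 \<le> h j j' n"
    and w_nonneg: "\<And>k. 0 \<le> w k"
    and r_nonneg: "\<And>k. 0 \<le> r k"
    and P_pos: "\<And>k. 0 < P k" and PR_pos: "0 < PR"
    and lb1_nonneg: "\<And>k. 0 \<le> lb1 k"
    and lc1_nonneg: "\<And>k. 0 \<le> lc1 k"
    and lAB_nonneg: "0 \<le> lAB"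
    and mu_nonneg: "\<And>k. 0 \<le> \<mu> k"
    and alpha_pos: "\<And>k. 0 < \<alpha> k" and alphaR_pos: "0 < \<alpha>R"
    and b2_nonneg: "\<And>k. 0 \<le> w k + \<mu> k - lb1 k"
    and xi_nonneg: "\<And>k. 0 \<le> w k + \<mu> k - lc1 k - lAB"
  shows "\<exists>\<rho>s ss. feasible N \<rho>s ss
           \<and> (\<forall>n\<in>{1..N}. \<forall>i. \<rho>s n i \<in> {0, 1})
           \<and> (\<forall>\<rho> s. feasible N \<rho> s \<longrightarrow>
                 dual_obj N h w r P PR lb1 lc1 lAB \<mu> \<alpha> \<alpha>R \<rho> s
                 \<le> dual_obj N h w r P PR lb1 lc1 lAB \<mu> \<alpha> \<alpha>R \<rho>s ss)"
proof -
  interpret dual_params h w lb1 lc1 \<mu> \<alpha> lAB \<alpha>R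
    by unfold_locales (fact assms)+
  have "\<forall>n. \<exists>\<rho>' v'. (\<forall>i. \<rho>' i \<in> {0, 1}) \<and> rho_sum \<rho>' \<le> 1 \<and> (\<forall>p. 0 \<le> v' p) \<and>
     (\<forall>\<rho> v. (\<forall>i. 0 \<le> \<rho> i) \<longrightarrow> rho_sum \<rho> \<le> 1 \<longrightarrow> (\<forall>p. 0 \<le> v p) \<longrightarrow>
        subcarrier_value n \<rho> v \<le> subcarrier_value n \<rho>' v')"
    using subcarrier_value_binary_max by blast
  then obtain \<rho>s ss where bin: "\<And>n i. \<rho>s n i \<in> {0, 1}" and feas: "\<And>n. rho_sum (\<rho>s n) \<le> 1"
    and pow: "\<And>n p. 0 \<le> ss n p"
    and opt: "\<And>n \<rho> v. \<forall>i. 0 \<le> \<rho> i \<Longrightarrow> rho_sum \<rho> \<le> 1 \<Longrightarrow> \<forall>p. 0 \<le> v p \<Longrightarrow>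
      subcarrier_value n \<rho> v \<le> subcarrier_value n (\<rho>s n) (ss n)"
    by metis
  have "0 \<le> \<rho>s n i \<and> \<rho>s n i \<le> 1" for n i
    using bin[of n i] by auto
  with feas pow have "feasible N \<rho>s ss"
    by (simp add: feasible_def)
  moreover have "dual_obj N h w r P PR lb1 lc1 lAB \<mu> \<alpha> \<alpha>R \<rho> s
      \<le> dual_obj N h w r P PR lb1 lc1 lAB \<mu> \<alpha> \<alpha>R \<rho>s ss" if "feasible N \<rho> s" for \<rho> s
  proof -
    have "subcarrier_value n (\<rho> n) (s n) \<le> subcarrier_value n (\<rho>s n) (ss n)" if "n \<in> {1..N}" for n
      using \<open>feasible N \<rho> s\<close> that by (intro opt) (auto simp: feasible_def)
    then have "(\<Sum>n=1..N. subcarrier_value n (\<rho> n) (s n)) \<le> (\<Sum>n=1..N. subcarrier_value n (\<rho>s n) (ss n))"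
      by (rule sum_mono)
    then show ?thesis
      unfolding dual_obj_eq_sum_subcarrier_value by simp
  qed
  ultimately show ?thesis
    using bin by blast
qed

end
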